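(* Let $G=(V,R,E)$ be a finite bipartite version–record graph, let $\mathbb{T}=(V,\mathbb{E})$ be a version tree on $V$ satisfying the standing assumptions below, and let $\delta\le 1$ be a positive parameter. If every edge $(v_i,v_j)\in\mathbb{E}$ has weight $w(v_i,v_j)>\delta|R|$, then the checkout cost when all versions are placed in one single partition, namely $\mathcal{C}_{avg}=|R|$, satisfies $\mathcal{C}_{avg}<\frac{1}{\delta}\cdot\frac{|E|}{|V|}$.
   Context: Versions $V=\{v_1,\dots,v_n\}$ and records $R$; $(v,r)\in E$ means version $v$ contains record $r$; $R(v)=\{r:(v,r)\in E\}$, and every record lies in some version, so $R=\bigcup_{v\in V}R(v)$. The version tree $\mathbb{T}$ is a rooted tree on vertex set $V$ whose edges go from a parent version to a child version (derivation relation); the weight of an edge is $w(v_i,v_j)=|R(v_i)\cap R(v_j)|$. Standing assumption (no cross-version diff rule): a record of a version that is not contained in its parent is a newly created record, i.e., for every record $r$ the set of versions containing $r$ is a connected subtree of $\mathbb{T}$. If all versions form one partition, the checkout cost of each version is $|R|$, so the average checkout cost is $|R|$. *)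

theory Defs
  imports Main Complex_Main
begin

definition recs :: "('v \<times> 'r) set \<Rightarrow> 'v \<Rightarrow> 'r set" where
  "recs E v = {r. (v, r) \<in> E}"

definition version_record_graph :: "'v set \<Rightarrow> 'r set \<Rightarrow> ('v \<times> 'r) set \<Rightarrow> bool" where
  "version_record_graph V R E \<longleftrightarrow>
     finite V \<and> finite R \<and> E \<subseteq> V \<times> R \<and> R = (\<Union>v\<in>V. recs E v)"

definition rooted_tree :: "'v set \<Rightarrow> ('v \<times> 'v) set \<Rightarrow> 'v \<Rightarrow> bool" where
  "rooted_tree V T rt \<longleftrightarrow>
     T \<subseteq> V \<times> V \<and> rt \<in> V \<and>
     (\<forall>u. (u, rt) \<notin> T) \<and>
     (\<forall>v\<in>V. v \<noteq> rt \<longrightarrow> (\<exists>!u. (u, v) \<in> T)) \<and>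
     (\<forall>v\<in>V. (rt, v) \<in> T\<^sup>*)"

definition connected_subtree :: "('v \<times> 'v) set \<Rightarrow> 'v set \<Rightarrow> bool" where
  "connected_subtree T S \<longleftrightarrow>
     S \<noteq> {} \<and> (\<forall>u\<in>S. \<forall>w\<in>S. (u, w) \<in> ((T \<union> T\<inverse>) \<inter> (S \<times> S))\<^sup>*)"

text \<open>Standing assumption (no cross-version diff): for every record r the set of
  versions containing r is a connected subtree of the version tree.\<close>

definition version_tree :: "'v set \<Rightarrow> 'r set \<Rightarrow> ('v \<times> 'r) set \<Rightarrow> ('v \<times> 'v) set \<Rightarrow> 'v \<Rightarrow> bool" where
  "version_tree V R E T rt \<longleftrightarrow>
     rooted_tree V T rt \<and> (\<forall>r\<in>R. connected_subtree T {v\<in>V. (v, r) \<in> E})"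

definition weight :: "('v \<times> 'r) set \<Rightarrow> 'v \<Rightarrow> 'v \<Rightarrow> nat" where
  "weight E vi vj = card (recs E vi \<inter> recs E vj)"

text \<open>Average checkout cost when all versions form one partition: each version's
  checkout cost is |R|.\<close>

definition single_partition_avg_cost :: "'v set \<Rightarrow> 'r set \<Rightarrow> real" where
  "single_partition_avg_cost V R = (\<Sum>v\<in>V. real (card R)) / real (card V)"

end

theory Submission
  imports Defs
begin

text \<open>Since the tree has at least two vertices, every version is incident to some tree
  edge, and the weight of that edge bounds its record count from below; hence every
  version holds more than \<open>\<delta>|R|\<close> records. Summing over the versions,
  \<open>|E| = \<Sum>\<^sub>v |R(v)| > \<delta>|R||V|\<close>.\<close>

lemma finite_recs:
  assumes "E \<subseteq> V \<times> R" and "finite R"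
  shows "finite (recs E v)"
  using assms by (auto intro: finite_subset[of _ R] simp: recs_def)

lemma version_record_graphD:
  assumes "version_record_graph V R E"
  shows "finite V" and "finite R" and "E \<subseteq> V \<times> R"
  using assms unfolding version_record_graph_def by blast+

lemma card_eq_sum_card_recs:
  assumes "E \<subseteq> V \<times> R" and "finite V" and "finite R"
  shows "card E = (\<Sum>v\<in>V. card (recs E v))"
proof -
  have "card E = card (Sigma V (recs E))"
    using assms(1) by (intro arg_cong[of _ _ card]) (auto simp: recs_def)
  also have "\<dots> = (\<Sum>v\<in>V. card (recs E v))"
    using assms finite_recs by (intro card_SigmaI) auto
  finally show ?thesis .
qed

lemma weight_commute: "weight E u v = weight E v u"
  by (simp add: weight_def Int_commute)

lemma weight_le_card_recs:
  assumes "finite (recs E v)"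
  shows "weight E u v \<le> card (recs E v)"
  unfolding weight_def using assms by (simp add: card_mono)

lemma rooted_tree_incident_edge:
  assumes "rooted_tree V T rt" and "card V \<ge> 2" and "v \<in> V"
  obtains u where "(u, v) \<in> T \<or> (v, u) \<in> T"
proof (cases "v = rt")
  case False
  then obtain u where "(u, v) \<in> T"
    using assms(1,3) unfolding rooted_tree_def by metis
  then show ?thesis
    using that by blast
next
  case True
  have "\<not> V \<subseteq> {rt}"
  proof
    assume "V \<subseteq> {rt}"
    then have "card V \<le> 1"
      using card_mono[of "{rt}" V] by simp
    with assms(2) show False
      by simp
  qed
  then obtain w where "w \<in> V" and "w \<noteq> rt"
    by blast
  then have "(rt, w) \<in> T\<^sup>+"
    using assms(1) unfolding rooted_tree_def by (auto simp: rtrancl_eq_or_trancl)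
  then obtain c where "(rt, c) \<in> T"
    by (auto dest: tranclD)
  then show ?thesis
    using that True by blast
qed

lemma card_recs_gt_if_tree_edge_weights_gt:
  assumes "version_record_graph V R E" and "rooted_tree V T rt" and "card V \<ge> 2"
    and "\<forall>(vi, vj)\<in>T. real (weight E vi vj) > c"
    and "v \<in> V"
  shows "real (card (recs E v)) > c"
proof -
  obtain u where "(u, v) \<in> T \<or> (v, u) \<in> T"
    using rooted_tree_incident_edge assms(2,3,5) .
  then have "real (weight E u v) > c"
  proof
    assume "(u, v) \<in> T"
    then show ?thesis
      using assms(4) by blast
  next
    assume "(v, u) \<in> T"
    then have "real (weight E v u) > c"
      using assms(4) by blast
    then show ?thesis
      by (simp only: weight_commute)
  qed
  moreover have "weight E u v \<le> card (recs E v)"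
  proof -
    have "finite (recs E v)"
      using version_record_graphD[OF assms(1)] by (intro finite_recs)
    then show ?thesis
      by (rule weight_le_card_recs)
  qed
  ultimately show ?thesis
    by linarith
qed

lemma card_edges_gt_if_card_recs_gt:
  assumes "version_record_graph V R E" and "V \<noteq> {}"
    and "\<forall>v\<in>V. real (card (recs E v)) > c"
  shows "real (card E) > c * real (card V)"
proof -
  note fin = version_record_graphD[OF assms(1)]
  then have "real (card E) = (\<Sum>v\<in>V. real (card (recs E v)))"
    by (simp add: card_eq_sum_card_recs)
  also have "\<dots> > (\<Sum>v\<in>V. c)"
    by (rule sum_strict_mono[OF fin(1) assms(2)]) (use assms(3) in blast)
  finally show ?thesis
    by (simp add: mult.commute)
qed

lemma single_partition_avg_cost_eq:
  assumes "V \<noteq> {}" and "finite V"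
  shows "single_partition_avg_cost V R = real (card R)"
  using assms by (simp add: single_partition_avg_cost_def)

theorem lemma1:
  fixes V :: "'v set" and R :: "'r set" and E :: "('v \<times> 'r) set"
    and T :: "('v \<times> 'v) set" and rt :: 'v and \<delta> :: real
  assumes "version_record_graph V R E"
    and "version_tree V R E T rt"
    and "card V \<ge> 2"
    and "0 < \<delta>" and "\<delta> \<le> 1"
    and "\<forall>(vi, vj)\<in>T. real (weight E vi vj) > \<delta> * real (card R)"
  shows "single_partition_avg_cost V R = real (card R)
    \<and> single_partition_avg_cost V R < (1 / \<delta>) * (real (card E) / real (card V))"
proof -
  have "V \<noteq> {}" and "finite V"
    using assms(3) card.infinite by fastforce+
  have "rooted_tree V T rt"
    using assms(2) unfolding version_tree_def by blast
  then have "\<forall>v\<in>V. real (card (recs E v)) > \<delta> * real (card R)"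
    using card_recs_gt_if_tree_edge_weights_gt[OF assms(1) _ assms(3,6)] by blast
  then have "\<delta> * real (card R) * real (card V) < real (card E)"
    by (rule card_edges_gt_if_card_recs_gt[OF assms(1) \<open>V \<noteq> {}\<close>])
  then have "real (card R) < (1 / \<delta>) * (real (card E) / real (card V))"
    using assms(3,4) by (simp add: field_simps)
  moreover have "single_partition_avg_cost V R = real (card R)"
    using \<open>V \<noteq> {}\<close> \<open>finite V\<close> by (rule single_partition_avg_cost_eq)
  ultimately show ?thesis
    by simp
qed

end
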